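(* Let $\alpha\ge1$ and let $\Phi_\alpha^*(\xi)=\sup_{z\in\mathbb R}\{\xi z-\Phi_\alpha(z)\}$ be the Legendre transform of $\Phi_\alpha$. With $\tilde c_\alpha:=\big(\tfrac{2}{\alpha^2}\big)^{1/(\alpha-1)}\tfrac{\alpha-1}{\alpha}$ (for $\alpha>1$), for all $\xi\in\mathbb R$: (1) if $\alpha=1$: $\Phi_1^*(\xi)\le e^{\xi}-\xi-1$; (2) if $\alpha\in(1,2]$: $\Phi_\alpha^*(\xi)\le\max\big\{\tilde c_\alpha|\xi|^{\alpha/(\alpha-1)},\tfrac1{2\alpha}\xi^2\big\}$; (3) if $\alpha\ge2$: $\Phi_\alpha^*(\xi)\le\tilde c_\alpha|\xi|^{\alpha/(\alpha-1)}$. Moreover, for all $\alpha\ge1$, $\Phi_\alpha^*(\xi)\le\frac1{2\alpha}\xi^2$ whenever $|\xi|\le\alpha$.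
   Context: For $\alpha\ge1$, $\Phi_\alpha(z)=\big((z+1)^\alpha-1\big)\log\big((z+1)^\alpha\big)$ for $z>-1$ and $\Phi_\alpha(z)=+\infty$ for $z\le-1$. *)

theory Defs
  imports "HOL-Analysis.Analysis" "HOL-Library.Extended_Real"
begin

definition Phi :: "real \<Rightarrow> real \<Rightarrow> ereal" where
  "Phi \<alpha> z = (if z > -1
     then ereal (((z + 1) powr \<alpha> - 1) * ln ((z + 1) powr \<alpha>))
     else \<infinity>)"

definition Phi_star :: "real \<Rightarrow> real \<Rightarrow> ereal" where
  "Phi_star \<alpha> \<xi> = (SUP z\<in>(UNIV::real set). ereal (\<xi> * z) - Phi \<alpha> z)"

definition c_tilde :: "real \<Rightarrow> real" where
  "c_tilde \<alpha> = (2 / \<alpha>\<^sup>2) powr (1 / (\<alpha> - 1)) * ((\<alpha> - 1) / \<alpha>)"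

end

theory Submission
  imports Defs
begin

text \<open>
  For z > -1 one has Phi_alpha(z) = alpha * phi_alpha(z) with
  phi_alpha(z) = ((1+z)^alpha - 1) ln(1+z), which is nondecreasing in alpha since both factors
  have the sign of z. Each bound on the conjugate comes from a pointwise minorant of phi_alpha
  whose own conjugate is explicit: z^2/2 for -1 < z <= 1 and, when |xi| <= alpha, z - 1/2 for
  z >= 0 (both from ln(1+z) >= 2z/(2+z)); and |z|^alpha/2 for z >= 1, or for all z when
  alpha >= 2. By a rescaled Young inequality the conjugate of alpha |z|^alpha / 2 is at most
  c_alpha |xi|^(alpha/(alpha-1)). For alpha = 1 the bound exp xi - xi - 1 is the tangent-line
  inequality for exp at ln(1+z).
\<close>

definition phi :: "real \<Rightarrow> real \<Rightarrow> real" where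
  "phi \<alpha> z = ((z + 1) powr \<alpha> - 1) * ln (z + 1)"

lemma Phi_star_leI:
  assumes "\<And>z. z > -1 \<Longrightarrow> \<xi> * z - \<alpha> * phi \<alpha> z \<le> B"
  shows "Phi_star \<alpha> \<xi> \<le> ereal B"
  unfolding Phi_star_def
proof (rule SUP_least)
  fix z :: real
  show "ereal (\<xi> * z) - Phi \<alpha> z \<le> ereal B"
  proof (cases "z > -1")
    case True
    then show ?thesis
      using assms[OF True] by (simp add: Phi_def phi_def algebra_simps)
  qed (simp add: Phi_def)
qed

lemma ln_one_plus_ge_pade:
  fixes z :: real
  assumes "z \<ge> 0"
  shows "2 * z / (z + 2) \<le> ln (z + 1)"
proof -
  let ?g = "\<lambda>z::real. ln (z + 1) - 2 * z / (z + 2)"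
  have deriv: "(?g has_real_derivative (1 / (x + 1) - 4 / (x + 2)\<^sup>2)) (at x)" if "x \<ge> 0" for x
    using that by (auto intro!: derivative_eq_intros simp: field_simps power2_eq_square)
  have deriv_nonneg: "1 / (x + 1) - 4 / (x + 2)\<^sup>2 \<ge> 0" if "x \<ge> 0" for x :: real
  proof -
    have "4 * (x + 1) \<le> (x + 2)\<^sup>2"
      by (simp add: power2_eq_square algebra_simps)
    then show ?thesis
      using that by (simp add: field_simps)
  qed
  have "?g 0 \<le> ?g z"
  proof (rule DERIV_nonneg_imp_nondecreasing[of 0 z ?g])
    fix x :: real
    assume "0 \<le> x"
    then show "\<exists>y. (?g has_real_derivative y) (at x) \<and> 0 \<le> y"
      using deriv deriv_nonneg by blast
  qed (use assms in auto)
  then show ?thesis by simp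
qed

lemma mult_ln_ge_half_sq:
  fixes z :: real
  assumes "z > -1" "z \<le> 1"
  shows "z\<^sup>2 / 2 \<le> z * ln (z + 1)"
proof (cases "z \<ge> 0")
  case True
  have "z\<^sup>2 / 2 \<le> z * (2 * z / (z + 2))"
    using True assms by (simp add: field_simps power2_eq_square mult_left_mono)
  also have "\<dots> \<le> z * ln (z + 1)"
    using ln_one_plus_ge_pade[OF True] True by (rule mult_left_mono)
  finally show ?thesis .
next
  case False
  have "ln (z + 1) \<le> z"
    using ln_le_minus_one[of "z + 1"] assms by simp
  then have "z * z \<le> z * ln (z + 1)"
    using False by (simp add: mult_left_mono_neg)
  then show ?thesis
    using False by (simp add: power2_eq_square)
qed

lemma mult_ln_ge_sub_half:
  fixes z :: real
  assumes "z \<ge> 0"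
  shows "z - 1 / 2 \<le> z * ln (z + 1)"
proof -
  have "(z - 1 / 2) * (z + 2) \<le> 2 * z * z"
    using zero_le_power2[of "z - 3 / 4"] by (simp add: power2_eq_square field_simps)
  then have "z - 1 / 2 \<le> z * (2 * z / (z + 2))"
    using assms by (simp add: field_simps)
  also have "\<dots> \<le> z * ln (z + 1)"
    using ln_one_plus_ge_pade[OF assms] assms by (rule mult_left_mono)
  finally show ?thesis .
qed

lemma phi_one:
  assumes "z > -1"
  shows "phi 1 z = z * ln (z + 1)"
  using assms by (simp add: phi_def)

lemma phi_one_le:
  fixes z \<alpha> :: real
  assumes "z > -1" "\<alpha> \<ge> 1"
  shows "phi 1 z \<le> phi \<alpha> z"
proof (cases "z \<ge> 0")
  case True
  have "(z + 1) powr 1 \<le> (z + 1) powr \<alpha>"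
    using True assms by (intro powr_mono) auto
  then show ?thesis
    using True assms by (auto simp: phi_def intro: mult_right_mono)
next
  case False
  have "(z + 1) powr \<alpha> \<le> z + 1"
    using False assms by (intro powr_le_one_le) auto
  moreover have "ln (z + 1) \<le> 0"
    using False assms by simp
  ultimately show ?thesis
    using assms by (auto simp: phi_def intro: mult_right_mono_neg)
qed

lemma phi_ge_half_sq:
  fixes z \<alpha> :: real
  assumes "z > -1" "z \<le> 1" "\<alpha> \<ge> 1"
  shows "z\<^sup>2 / 2 \<le> phi \<alpha> z"
  using mult_ln_ge_half_sq[of z] phi_one_le[of z \<alpha>] assms by (simp add: phi_one)

lemma phi_ge_sub_half:
  fixes z \<alpha> :: real
  assumes "z \<ge> 0" "\<alpha> \<ge> 1"
  shows "z - 1 / 2 \<le> phi \<alpha> z"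
  using mult_ln_ge_sub_half[of z] phi_one_le[of z \<alpha>] assms by (simp add: phi_one)

lemma phi_ge_half_powr:
  fixes z \<alpha> :: real
  assumes "z \<ge> 1" "\<alpha> \<ge> 1"
  shows "z powr \<alpha> / 2 \<le> phi \<alpha> z"
proof -
  have "z powr \<alpha> + z powr (\<alpha> - 1) = (z + 1) * z powr (\<alpha> - 1)"
    using assms by (simp add: powr_diff field_simps)
  also have "\<dots> \<le> (z + 1) * (z + 1) powr (\<alpha> - 1)"
    using assms by (intro mult_left_mono powr_mono2) auto
  also have "\<dots> = (z + 1) powr \<alpha>"
    using assms by (simp add: powr_diff)
  finally have "z powr \<alpha> \<le> (z + 1) powr \<alpha> - 1"
    using ge_one_powr_ge_zero[of z "\<alpha> - 1"] assms by linarith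
  moreover have "1 / 2 \<le> ln (z + 1)"
  proof -
    have "ln 2 \<le> ln (z + 1)"
      using assms by simp
    then show ?thesis
      using ln2_ge_two_thirds by linarith
  qed
  moreover have "0 \<le> z powr \<alpha>"
    by simp
  ultimately have "z powr \<alpha> * (1 / 2) \<le> ((z + 1) powr \<alpha> - 1) * ln (z + 1)"
    by (intro mult_mono) linarith+
  then show ?thesis
    by (simp add: phi_def)
qed

lemma phi_ge_half_abs_powr:
  fixes z \<alpha> :: real
  assumes "z > -1" "\<alpha> \<ge> 2"
  shows "\<bar>z\<bar> powr \<alpha> / 2 \<le> phi \<alpha> z"
proof (cases "z \<le> 1")
  case True
  have "\<bar>z\<bar> powr \<alpha> \<le> \<bar>z\<bar> powr 2"
    using True assms by (intro powr_mono') auto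
  then show ?thesis
    using phi_ge_half_sq[of z \<alpha>] True assms by (simp add: powr_numeral)
next
  case False
  then show ?thesis
    using phi_ge_half_powr[of z \<alpha>] assms by simp
qed

lemma quadratic_conjugate_le:
  fixes \<alpha> \<xi> z :: real
  assumes "\<alpha> > 0"
  shows "\<xi> * z - \<alpha> * (z\<^sup>2 / 2) \<le> \<xi>\<^sup>2 / (2 * \<alpha>)"
proof -
  have "\<alpha> * (\<xi> * z - \<alpha> * (z\<^sup>2 / 2)) \<le> \<xi>\<^sup>2 / 2"
    using zero_le_power2[of "\<xi> - \<alpha> * z"] by (simp add: power2_eq_square algebra_simps)
  then show ?thesis
    using assms by (simp add: field_simps)
qed

lemma affine_conjugate_le:
  fixes \<alpha> \<xi> z :: real
  assumes "\<alpha> > 0" "z \<ge> 1" "\<bar>\<xi>\<bar> \<le> \<alpha>"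
  shows "\<xi> * z - \<alpha> * (z - 1 / 2) \<le> \<xi>\<^sup>2 / (2 * \<alpha>)"
proof -
  have "0 \<le> 2 * \<alpha> * z - (\<alpha> + \<xi>)"
    using mult_left_mono[OF \<open>z \<ge> 1\<close>, of "2 * \<alpha>"] assms by linarith
  then have "0 \<le> (\<alpha> - \<xi>) * (2 * \<alpha> * z - (\<alpha> + \<xi>))"
    using assms by simp
  moreover have "(\<alpha> - \<xi>) * (2 * \<alpha> * z - (\<alpha> + \<xi>)) + 2 * \<alpha> * (\<xi> * z - \<alpha> * (z - 1 / 2)) = \<xi>\<^sup>2"
    by (simp add: algebra_simps power2_eq_square)
  ultimately have "2 * \<alpha> * (\<xi> * z - \<alpha> * (z - 1 / 2)) \<le> \<xi>\<^sup>2"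
    by linarith
  then show ?thesis
    using assms by (simp add: pos_le_divide_eq mult.commute)
qed

lemma Youngs_inequality_scaled:
  fixes p K a b :: real
  assumes "p > 1" "K > 0" "a \<ge> 0" "b \<ge> 0"
  shows "a * b \<le> K * a powr p / p + K powr (-1 / (p - 1)) * b powr (p / (p - 1)) * ((p - 1) / p)"
proof -
  define q where "q = p / (p - 1)"
  define s where "s = K powr (1 / p)"
  have "s > 0"
    using assms by (simp add: s_def)
  have "q > 1" "1 / p + 1 / q = 1"
    using assms by (simp_all add: q_def field_simps)
  then have "(s * a) * (b / s) \<le> (s * a) powr p / p + (b / s) powr q / q"
    using assms \<open>s > 0\<close> by (intro Youngs_inequality) auto
  moreover have "(s * a) powr p = K * a powr p"
    using assms \<open>s > 0\<close> by (simp add: s_def powr_mult powr_powr)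
  moreover have "(b / s) powr q = K powr (-1 / (p - 1)) * b powr q"
    using assms \<open>s > 0\<close> by (simp add: s_def powr_divide powr_powr q_def powr_minus_divide field_simps)
  ultimately show ?thesis
    using \<open>s > 0\<close> assms by (simp add: q_def field_simps)
qed

lemma power_conjugate_le:
  fixes \<alpha> \<xi> z :: real
  assumes "\<alpha> > 1"
  shows "\<xi> * z - \<alpha> * (\<bar>z\<bar> powr \<alpha> / 2) \<le> c_tilde \<alpha> * \<bar>\<xi>\<bar> powr (\<alpha> / (\<alpha> - 1))"
proof -
  have "\<xi> * z \<le> \<bar>z\<bar> * \<bar>\<xi>\<bar>"
    by (simp add: abs_mult[symmetric] mult.commute)
  also have "\<dots> \<le> \<alpha>\<^sup>2 / 2 * \<bar>z\<bar> powr \<alpha> / \<alpha>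
      + (\<alpha>\<^sup>2 / 2) powr (-1 / (\<alpha> - 1)) * \<bar>\<xi>\<bar> powr (\<alpha> / (\<alpha> - 1)) * ((\<alpha> - 1) / \<alpha>)"
    using assms by (intro Youngs_inequality_scaled) auto
  also have "\<dots> = \<alpha> * (\<bar>z\<bar> powr \<alpha> / 2) + c_tilde \<alpha> * \<bar>\<xi>\<bar> powr (\<alpha> / (\<alpha> - 1))"
    using assms by (simp add: c_tilde_def power2_eq_square powr_minus_divide powr_divide)
  finally show ?thesis
    by linarith
qed

lemma Phi_star_one_le: "Phi_star 1 \<xi> \<le> ereal (exp \<xi> - \<xi> - 1)"
proof (rule Phi_star_leI)
  fix z :: real
  assume "z > -1"
  define L where "L = ln (z + 1)"
  have "exp \<xi> = (z + 1) * exp (\<xi> - L)"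
    using \<open>z > -1\<close> by (simp add: L_def exp_diff)
  also have "\<dots> \<ge> (z + 1) * (1 + (\<xi> - L))"
    using \<open>z > -1\<close> exp_ge_add_one_self[of "\<xi> - L"] by (intro mult_left_mono) auto
  finally have "(z + 1) * (1 + (\<xi> - L)) \<le> exp \<xi>" .
  moreover have "L \<le> z"
    using ln_le_minus_one[of "z + 1"] \<open>z > -1\<close> by (simp add: L_def)
  moreover have "phi 1 z = z * L"
    using \<open>z > -1\<close> by (simp add: phi_one L_def)
  ultimately show "\<xi> * z - 1 * phi 1 z \<le> exp \<xi> - \<xi> - 1"
    by (simp add: algebra_simps)
qed

lemma Phi_star_le_quadratic:
  fixes \<alpha> \<xi> :: real
  assumes "\<alpha> \<ge> 1" "\<bar>\<xi>\<bar> \<le> \<alpha>"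
  shows "Phi_star \<alpha> \<xi> \<le> ereal (\<xi>\<^sup>2 / (2 * \<alpha>))"
proof (rule Phi_star_leI)
  fix z :: real
  assume "z > -1"
  show "\<xi> * z - \<alpha> * phi \<alpha> z \<le> \<xi>\<^sup>2 / (2 * \<alpha>)"
  proof (cases "z \<le> 1")
    case True
    then have "\<xi> * z - \<alpha> * phi \<alpha> z \<le> \<xi> * z - \<alpha> * (z\<^sup>2 / 2)"
      using phi_ge_half_sq[of z \<alpha>] \<open>z > -1\<close> assms by (intro diff_left_mono mult_left_mono) auto
    also have "\<dots> \<le> \<xi>\<^sup>2 / (2 * \<alpha>)"
      using assms by (intro quadratic_conjugate_le) auto
    finally show ?thesis .
  next
    case False
    then have "\<xi> * z - \<alpha> * phi \<alpha> z \<le> \<xi> * z - \<alpha> * (z - 1 / 2)"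
      using phi_ge_sub_half[of z \<alpha>] assms by (intro diff_left_mono mult_left_mono) auto
    also have "\<dots> \<le> \<xi>\<^sup>2 / (2 * \<alpha>)"
      using False assms by (intro affine_conjugate_le) auto
    finally show ?thesis .
  qed
qed

lemma Phi_star_le_max:
  fixes \<alpha> \<xi> :: real
  assumes "\<alpha> > 1"
  shows "Phi_star \<alpha> \<xi> \<le> ereal (max (c_tilde \<alpha> * \<bar>\<xi>\<bar> powr (\<alpha> / (\<alpha> - 1))) (\<xi>\<^sup>2 / (2 * \<alpha>)))"
proof (rule Phi_star_leI)
  fix z :: real
  assume "z > -1"
  show "\<xi> * z - \<alpha> * phi \<alpha> z \<le> max (c_tilde \<alpha> * \<bar>\<xi>\<bar> powr (\<alpha> / (\<alpha> - 1))) (\<xi>\<^sup>2 / (2 * \<alpha>))"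
  proof (cases "z \<le> 1")
    case True
    then have "\<xi> * z - \<alpha> * phi \<alpha> z \<le> \<xi> * z - \<alpha> * (z\<^sup>2 / 2)"
      using phi_ge_half_sq[of z \<alpha>] \<open>z > -1\<close> assms by (intro diff_left_mono mult_left_mono) auto
    also have "\<dots> \<le> \<xi>\<^sup>2 / (2 * \<alpha>)"
      using assms by (intro quadratic_conjugate_le) auto
    finally show ?thesis by linarith
  next
    case False
    then have "\<xi> * z - \<alpha> * phi \<alpha> z \<le> \<xi> * z - \<alpha> * (\<bar>z\<bar> powr \<alpha> / 2)"
      using phi_ge_half_powr[of z \<alpha>] assms by (intro diff_left_mono mult_left_mono) auto
    also have "\<dots> \<le> c_tilde \<alpha> * \<bar>\<xi>\<bar> powr (\<alpha> / (\<alpha> - 1))"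
      using assms by (rule power_conjugate_le)
    finally show ?thesis by linarith
  qed
qed

lemma Phi_star_le_powr:
  fixes \<alpha> \<xi> :: real
  assumes "\<alpha> \<ge> 2"
  shows "Phi_star \<alpha> \<xi> \<le> ereal (c_tilde \<alpha> * \<bar>\<xi>\<bar> powr (\<alpha> / (\<alpha> - 1)))"
proof (rule Phi_star_leI)
  fix z :: real
  assume "z > -1"
  then have "\<xi> * z - \<alpha> * phi \<alpha> z \<le> \<xi> * z - \<alpha> * (\<bar>z\<bar> powr \<alpha> / 2)"
    using phi_ge_half_abs_powr[of z \<alpha>] assms by (intro diff_left_mono mult_left_mono) auto
  also have "\<dots> \<le> c_tilde \<alpha> * \<bar>\<xi>\<bar> powr (\<alpha> / (\<alpha> - 1))"
    using assms by (intro power_conjugate_le) auto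
  finally show "\<xi> * z - \<alpha> * phi \<alpha> z \<le> c_tilde \<alpha> * \<bar>\<xi>\<bar> powr (\<alpha> / (\<alpha> - 1))" .
qed

theorem mainTheorem8:
  fixes \<alpha> \<xi> :: real
  assumes "\<alpha> \<ge> 1"
  shows "(\<alpha> = 1 \<longrightarrow> Phi_star 1 \<xi> \<le> ereal (exp \<xi> - \<xi> - 1))
       \<and> (1 < \<alpha> \<and> \<alpha> \<le> 2 \<longrightarrow>
            Phi_star \<alpha> \<xi> \<le> ereal (max (c_tilde \<alpha> * \<bar>\<xi>\<bar> powr (\<alpha> / (\<alpha> - 1))) (\<xi>\<^sup>2 / (2 * \<alpha>))))
       \<and> (\<alpha> \<ge> 2 \<longrightarrow> Phi_star \<alpha> \<xi> \<le> ereal (c_tilde \<alpha> * \<bar>\<xi>\<bar> powr (\<alpha> / (\<alpha> - 1))))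
       \<and> (\<bar>\<xi>\<bar> \<le> \<alpha> \<longrightarrow> Phi_star \<alpha> \<xi> \<le> ereal (\<xi>\<^sup>2 / (2 * \<alpha>)))"
  using Phi_star_one_le Phi_star_le_max Phi_star_le_powr Phi_star_le_quadratic assms
  by simp

end
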